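(* Let $D$ be a quasilocal API-domain with quotient field $K$ and let $L$ be a subfield of $K$. Then $D\cap L$ is a quasilocal API-domain.
   Context: An API-domain is an integral domain in which for every nonempty subset $\{d_\alpha\}$ of nonzero elements there is a natural number $n$ with the ideal generated by $\{d_\alpha^n\}$ principal. Quasilocal: unique maximal ideal. *)

theory Defs
  imports "HOL-Algebra.Algebra"
begin

definition API_domain :: "('a, 'b) ring_scheme \<Rightarrow> bool" where
  "API_domain R \<longleftrightarrow> domain R \<and>
     (\<forall>S. S \<noteq> {} \<longrightarrow> S \<subseteq> carrier R - {\<zero>\<^bsub>R\<^esub>} \<longrightarrow>
        (\<exists>n::nat. n \<ge> 1 \<and> principalideal (genideal R ((\<lambda>d. d [^]\<^bsub>R\<^esub> n) ` S)) R))"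

definition quasilocal :: "('a, 'b) ring_scheme \<Rightarrow> bool" where
  "quasilocal R \<longleftrightarrow> (\<exists>!M. maximalideal M R)"

end

theory Submission
  imports Defs
begin

(*
  Let M be the maximal ideal of D. In a quasilocal ring every element outside the
  maximal ideal is a unit, and the inverse in K of a nonzero element of L lies in L;
  hence every element of D \<inter> L outside M \<inter> L is a unit of D \<inter> L, which makes
  M \<inter> L its unique maximal ideal.

  For the API property let S \<subseteq> D \<inter> L consist of nonzero elements and choose n with
  S^n D = c D. Every t \<in> S^n is u_t c with u_t \<in> D. If all u_t were in M, then S^n D
  would lie in the ideal M c, forcing c \<in> M c, i.e. 1 \<in> M. So some u_t is a unit and
  t\<^sub>0 = u_t c \<in> S^n alone generates S^n D. Each t \<in> S^n is then t\<^sub>0 times an element of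
  D which, being t / t\<^sub>0, also lies in L; thus t\<^sub>0 generates S^n (D \<inter> L) as well.
*)

lemma (in domain) nat_pow_nonzero:
  assumes "x \<in> carrier R" and "x \<noteq> \<zero>"
  shows "x [^] (n::nat) \<noteq> \<zero>"
  using assms by (induction n) (auto simp: integral_iff)

lemma (in cring) ideal_image_mult_right:
  assumes "ideal I R" and "c \<in> carrier R"
  shows "ideal ((\<lambda>x. x \<otimes> c) ` I) R"
proof -
  interpret ideal I R by fact
  let ?J = "(\<lambda>x. x \<otimes> c) ` I"
  show ?thesis
  proof (rule idealI[OF ring_axioms])
    show "subgroup ?J (add_monoid R)"
    proof (rule subgroup.intro)
      show "?J \<subseteq> carrier (add_monoid R)" and "\<one>\<^bsub>add_monoid R\<^esub> \<in> ?J"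
        using assms(2) by (auto intro: image_eqI[of _ _ \<zero>])
    next
      fix u v assume "u \<in> ?J" "v \<in> ?J"
      then obtain x y where "x \<in> I" "y \<in> I" "u = x \<otimes> c" "v = y \<otimes> c"
        by blast
      then show "u \<otimes>\<^bsub>add_monoid R\<^esub> v \<in> ?J" and "inv\<^bsub>add_monoid R\<^esub> u \<in> ?J"
        using assms(2) unfolding a_inv_def[symmetric]
        by (auto simp: l_distr[symmetric] l_minus[symmetric])
    qed
    fix a u assume "u \<in> ?J" "a \<in> carrier R"
    then obtain x where "x \<in> I" "u = x \<otimes> c"
      by blast
    moreover have "a \<otimes> u = (a \<otimes> x) \<otimes> c" and "u \<otimes> a = (x \<otimes> a) \<otimes> c"
      using calculation \<open>a \<in> carrier R\<close> assms(2) by (simp_all add: Icarr m_ac)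
    ultimately show "a \<otimes> u \<in> ?J" and "u \<otimes> a \<in> ?J"
      using \<open>a \<in> carrier R\<close> I_l_closed I_r_closed by auto
  qed
qed

lemma (in cring) principalideal_genidealI:
  assumes "T \<subseteq> carrier R" and "t \<in> T" and "T \<subseteq> PIdl t"
  shows "principalideal (Idl T) R"
proof (rule principalidealI[OF genideal_ideal[OF assms(1)]])
  have "t \<in> carrier R"
    using assms(1,2) by blast
  have "Idl T = PIdl t"
    using genideal_minimal[OF cgenideal_ideal[OF \<open>t \<in> carrier R\<close>] assms(3)]
      cgenideal_minimal[OF genideal_ideal[OF assms(1)]] genideal_self[OF assms(1)] assms(2)
    by blast
  with \<open>t \<in> carrier R\<close> show "\<exists>i\<in>carrier R. Idl T = Idl {i}"
    using cgenideal_eq_genideal by blast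
qed

lemma (in ring) ex_maximalideal_superset:
  assumes "ideal I R" and "\<one> \<notin> I"
  obtains M where "maximalideal M R" and "I \<subseteq> M"
proof -
  define \<F> where "\<F> = {J. ideal J R \<and> I \<subseteq> J \<and> \<one> \<notin> J}"
  have "\<exists>M\<in>\<F>. \<forall>J\<in>\<F>. M \<subseteq> J \<longrightarrow> J = M"
  proof (rule subset_Zorn_nonempty)
    show "\<F> \<noteq> {}"
      using assms unfolding \<F>_def by blast
  next
    fix C assume "C \<noteq> {}" and chain: "subset.chain \<F> C"
    then have "ideal (\<Union>C) R"
      using chain_Union_is_ideal[of C] unfolding pred_on.chain_def \<F>_def by auto
    then show "\<Union>C \<in> \<F>"
      using \<open>C \<noteq> {}\<close> chain unfolding pred_on.chain_def \<F>_def by blast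
  qed
  then obtain M where M: "M \<in> \<F>" and max: "\<And>J. J \<in> \<F> \<Longrightarrow> M \<subseteq> J \<Longrightarrow> J = M"
    by blast
  have "maximalideal M R"
  proof (rule maximalidealI)
    show "ideal M R" and "carrier R \<noteq> M"
      using M unfolding \<F>_def by auto
    fix J assume "ideal J R" "M \<subseteq> J" "J \<subseteq> carrier R"
    then show "J = M \<or> J = carrier R"
      using M max[of J] ideal.one_imp_carrier[of J R] unfolding \<F>_def by blast
  qed
  with M that show ?thesis
    unfolding \<F>_def by blast
qed

lemma (in cring) quasilocal_Units:
  assumes "quasilocal R" and "maximalideal M R" and "x \<in> carrier R - M"
  shows "x \<in> Units R"
proof (rule ccontr)
  assume "x \<notin> Units R"
  then have "\<one> \<notin> PIdl x"
    using assms(3) ideal_eq_carrier_iff[of x] ideal.one_imp_carrier[OF cgenideal_ideal[of x]]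
    by auto
  then obtain N where "maximalideal N R" and "PIdl x \<subseteq> N"
    using ex_maximalideal_superset cgenideal_ideal assms(3) by blast
  moreover have "N = M"
    using assms(1,2) \<open>maximalideal N R\<close> unfolding quasilocal_def by blast
  ultimately show False
    using cgenideal_self[of x] assms(3) by auto
qed

lemma (in ring) quasilocalI:
  assumes "ideal I R" and "\<one> \<notin> I" and "\<And>x. x \<in> carrier R - I \<Longrightarrow> x \<in> Units R"
  shows "quasilocal R"
proof -
  have unit_free: "J \<subseteq> I" if "ideal J R" "\<one> \<notin> J" for J
  proof
    fix x assume "x \<in> J"
    show "x \<in> I"
    proof (rule ccontr)
      assume "x \<notin> I"
      then have "x \<in> Units R"
        using assms(3) \<open>x \<in> J\<close> ideal.Icarr[OF that(1)] by blast
      then have "inv x \<otimes> x \<in> J"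
        using ideal.I_l_closed[OF that(1) \<open>x \<in> J\<close>] by blast
      then show False
        using \<open>x \<in> Units R\<close> that(2) by simp
    qed
  qed
  have "maximalideal I R"
  proof (rule maximalidealI[OF assms(1)])
    show "carrier R \<noteq> I"
      using assms(2) by auto
    fix J assume "ideal J R" "I \<subseteq> J" "J \<subseteq> carrier R"
    then show "J = I \<or> J = carrier R"
      using unit_free[of J] ideal.one_imp_carrier[of J R] by blast
  qed
  moreover have "N = I" if "maximalideal N R" for N
  proof -
    interpret N: maximalideal N R by fact
    have "N \<subseteq> I"
      using unit_free N.is_ideal N.I_notcarr N.one_imp_carrier by blast
    then show ?thesis
      using N.I_maximal[OF assms(1)] ideal.Icarr[OF assms(1)] assms(2) by blast
  qed
  ultimately show ?thesis
    unfolding quasilocal_def by blast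
qed

lemma (in domain) quasilocal_principal_genideal_member:
  assumes "quasilocal R" and "T \<subseteq> carrier R" and "T \<noteq> {}"
    and "principalideal (Idl T) R"
  obtains t where "t \<in> T" and "Idl T = PIdl t"
proof -
  obtain c where c: "c \<in> carrier R" and Tc: "Idl T = PIdl c"
    using principalideal.generate[OF assms(4)] cgenideal_eq_genideal by auto
  obtain M where M: "maximalideal M R"
    using assms(1) unfolding quasilocal_def by blast
  interpret M: maximalideal M R by fact
  have multiples: "\<exists>u\<in>carrier R. t = u \<otimes> c" if "t \<in> T" for t
    using genideal_self[OF assms(2)] that Tc unfolding cgenideal_def by auto
  have "\<exists>t\<in>T. \<exists>u\<in>carrier R - M. t = u \<otimes> c"
  proof (cases "c = \<zero>")
    case True
    then show ?thesis
      using assms(3) multiples c M.I_notcarr M.one_imp_carrier by force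
  next
    case False
    show ?thesis
    proof (rule ccontr)
      assume "\<not> ?thesis"
      then have "T \<subseteq> (\<lambda>m. m \<otimes> c) ` M"
        using multiples by blast
      then have "c \<in> (\<lambda>m. m \<otimes> c) ` M"
        using genideal_minimal[OF ideal_image_mult_right[OF M.is_ideal c]]
          cgenideal_self[OF c] Tc by blast
      then obtain m where "m \<in> M" and "m \<otimes> c = \<one> \<otimes> c"
        using c by auto
      then have "\<one> \<in> M"
        using m_rcancel[OF False c] M.Icarr by simp
      then show False
        using M.I_notcarr M.one_imp_carrier by blast
    qed
  qed
  then obtain t u where "t \<in> T" "u \<in> carrier R - M" "t = u \<otimes> c"
    by blast
  moreover have "u \<in> Units R"
    using quasilocal_Units[OF assms(1) M] calculation(2) .
  ultimately have "PIdl t = PIdl c"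
    using associated_iff_same_ideal c associatedI2[of u t c] m_comm by auto
  with \<open>t \<in> T\<close> Tc that show ?thesis
    by simp
qed

lemma (in ring) ideal_contract_subring:
  assumes "subring A R" and "subring B R" and "A \<subseteq> B"
    and "ideal I (R\<lparr>carrier := B\<rparr>)"
  shows "ideal (I \<inter> A) (R\<lparr>carrier := A\<rparr>)"
proof -
  have "ring_hom_ring (R\<lparr>carrier := A\<rparr>) (R\<lparr>carrier := B\<rparr>) id"
    using assms(3) subring_is_ring[OF assms(1)] subring_is_ring[OF assms(2)]
    by (auto intro!: ring_hom_ringI2 ring_hom_memI)
  then have "ideal {r \<in> A. r \<in> I} (R\<lparr>carrier := A\<rparr>)"
    using ring_hom_ring.ideal_vimage[OF _ assms(4)] by fastforce
  moreover have "{r \<in> A. r \<in> I} = I \<inter> A"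
    by blast
  ultimately show ?thesis
    by simp
qed

lemma (in ring) Units_subring_inter_subfield:
  assumes "subring D R" and "subfield L R"
    and "x \<in> Units (R\<lparr>carrier := D\<rparr>)" and "x \<in> L"
  shows "x \<in> Units (R\<lparr>carrier := D \<inter> L\<rparr>)"
proof -
  obtain y where y: "y \<in> D" "x \<otimes> y = \<one>" "y \<otimes> x = \<one>"
    using assms(3) unfolding Units_def by auto
  have "y \<in> carrier R"
    using y(1) subringE(1)[OF assms(1)] by blast
  have "x \<noteq> \<zero>"
    using y(2) \<open>y \<in> carrier R\<close> subfieldE(6)[OF assms(2)] by auto
  moreover have "\<one> \<in> L"
    using subringE(3)[OF subfieldE(1)[OF assms(2)]] .
  ultimately have "y \<in> L"
    using subfield_m_inv_simprule[OF assms(2), of x y] y(2) assms(4) \<open>y \<in> carrier R\<close> by simp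
  then show ?thesis
    using y assms(3,4) unfolding Units_def by auto
qed

lemma (in cring) cgenideal_subring_inter_subfield:
  assumes "subring D R" and "subfield L R" and "a \<in> D \<inter> L" and "a \<noteq> \<zero>"
  shows "PIdl\<^bsub>R\<lparr>carrier := D \<inter> L\<rparr>\<^esub> a = PIdl\<^bsub>R\<lparr>carrier := D\<rparr>\<^esub> a \<inter> L"
proof -
  have "x \<in> L" if "x \<in> D" and "x \<otimes> a \<in> L" for x
  proof -
    have "x \<in> carrier R" and "a \<in> carrier R"
      using that(1) assms(3) subringE(1)[OF assms(1)] by auto
    then have "a \<otimes> x \<in> L"
      using that(2) m_comm by simp
    then show ?thesis
      using subfield_m_inv_simprule[OF assms(2)] assms(3,4) \<open>x \<in> carrier R\<close> by blast
  qed
  moreover have "x \<otimes> a \<in> L" if "x \<in> L" for x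
    using that assms(3) subringE(6)[OF subfieldE(1)[OF assms(2)]] by blast
  ultimately show ?thesis
    unfolding cgenideal_def by auto
qed

lemma (in cring) quasilocal_subring_inter_subfield:
  assumes "subring D R" and "subfield L R" and "quasilocal (R\<lparr>carrier := D\<rparr>)"
  shows "quasilocal (R\<lparr>carrier := D \<inter> L\<rparr>)"
proof -
  have E: "subring (D \<inter> L) R"
    using subring_inter[OF assms(1) subfieldE(1)[OF assms(2)]] .
  interpret D: cring "R\<lparr>carrier := D\<rparr>"
    using subcring_iff[OF subringE(1)[OF assms(1)]] subcringI'[OF assms(1)] by blast
  interpret E: ring "R\<lparr>carrier := D \<inter> L\<rparr>"
    using subring_is_ring[OF E] .
  obtain M where M: "maximalideal M (R\<lparr>carrier := D\<rparr>)"
    using assms(3) unfolding quasilocal_def by blast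
  interpret M: maximalideal M "R\<lparr>carrier := D\<rparr>" by fact
  show ?thesis
  proof (rule E.quasilocalI)
    show "ideal (M \<inter> (D \<inter> L)) (R\<lparr>carrier := D \<inter> L\<rparr>)"
      using ideal_contract_subring[OF E assms(1) _ M.is_ideal] by blast
    show "\<one>\<^bsub>R\<lparr>carrier := D \<inter> L\<rparr>\<^esub> \<notin> M \<inter> (D \<inter> L)"
      using M.I_notcarr M.one_imp_carrier by auto
    fix x assume "x \<in> carrier (R\<lparr>carrier := D \<inter> L\<rparr>) - M \<inter> (D \<inter> L)"
    then have "x \<in> Units (R\<lparr>carrier := D\<rparr>)" and "x \<in> L"
      using D.quasilocal_Units[OF assms(3) M] by auto
    then show "x \<in> Units (R\<lparr>carrier := D \<inter> L\<rparr>)"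
      using Units_subring_inter_subfield[OF assms(1,2)] by blast
  qed
qed

lemma (in domain) API_domain_subring_inter_subfield:
  assumes "subring D R" and "subfield L R"
    and "API_domain (R\<lparr>carrier := D\<rparr>)" and "quasilocal (R\<lparr>carrier := D\<rparr>)"
  shows "API_domain (R\<lparr>carrier := D \<inter> L\<rparr>)"
  unfolding API_domain_def
proof (intro conjI allI impI)
  have E: "subring (D \<inter> L) R"
    using subring_inter[OF assms(1) subfieldE(1)[OF assms(2)]] .
  interpret D: domain "R\<lparr>carrier := D\<rparr>"
    using subring_is_domain[OF assms(1)] .
  interpret E: domain "R\<lparr>carrier := D \<inter> L\<rparr>"
    using subring_is_domain[OF E] .
  show "domain (R\<lparr>carrier := D \<inter> L\<rparr>)"
    by (rule E.domain_axioms)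
  fix S assume "S \<noteq> {}" and "S \<subseteq> carrier (R\<lparr>carrier := D \<inter> L\<rparr>) - {\<zero>\<^bsub>R\<lparr>carrier := D \<inter> L\<rparr>\<^esub>}"
  then have S: "S \<subseteq> D \<inter> L - {\<zero>}"
    by simp
  then have "S \<subseteq> carrier (R\<lparr>carrier := D\<rparr>) - {\<zero>\<^bsub>R\<lparr>carrier := D\<rparr>\<^esub>}"
    by auto
  then obtain n :: nat where "n \<ge> 1"
    and pow_principal: "principalideal (Idl\<^bsub>R\<lparr>carrier := D\<rparr>\<^esub> ((\<lambda>d. d [^]\<^bsub>R\<lparr>carrier := D\<rparr>\<^esub> n) ` S)) (R\<lparr>carrier := D\<rparr>)"
    using assms(3) \<open>S \<noteq> {}\<close> unfolding API_domain_def by blast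
  define T where "T = (\<lambda>d. d [^] n) ` S"
  have T_principal: "principalideal (Idl\<^bsub>R\<lparr>carrier := D\<rparr>\<^esub> T) (R\<lparr>carrier := D\<rparr>)"
    using pow_principal unfolding T_def nat_pow_consistent[symmetric] .
  have T: "T \<subseteq> D \<inter> L - {\<zero>}"
  proof
    fix t assume "t \<in> T"
    then obtain s where "s \<in> D \<inter> L - {\<zero>}" and "t = s [^] n"
      using S unfolding T_def by blast
    then show "t \<in> D \<inter> L - {\<zero>}"
      using E.nat_pow_closed[of s n] nat_pow_nonzero[of s n] subringE(1)[OF E]
      unfolding nat_pow_consistent[symmetric] by auto
  qed
  obtain t where "t \<in> T" and t_generates: "Idl\<^bsub>R\<lparr>carrier := D\<rparr>\<^esub> T = PIdl\<^bsub>R\<lparr>carrier := D\<rparr>\<^esub> t"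
    using D.quasilocal_principal_genideal_member[OF assms(4)] T \<open>S \<noteq> {}\<close> T_principal
    unfolding T_def by auto
  have "T \<subseteq> PIdl\<^bsub>R\<lparr>carrier := D\<rparr>\<^esub> t \<inter> L"
    using D.genideal_self[of T] t_generates T by auto
  then have "T \<subseteq> PIdl\<^bsub>R\<lparr>carrier := D \<inter> L\<rparr>\<^esub> t"
    using cgenideal_subring_inter_subfield[OF assms(1,2)] T \<open>t \<in> T\<close> by auto
  then have "principalideal (Idl\<^bsub>R\<lparr>carrier := D \<inter> L\<rparr>\<^esub> T) (R\<lparr>carrier := D \<inter> L\<rparr>)"
    using E.principalideal_genidealI T \<open>t \<in> T\<close> by auto
  then show "\<exists>n::nat. n \<ge> 1 \<and> principalideal (Idl\<^bsub>R\<lparr>carrier := D \<inter> L\<rparr>\<^esub> ((\<lambda>d. d [^]\<^bsub>R\<lparr>carrier := D \<inter> L\<rparr>\<^esub> n) ` S)) (R\<lparr>carrier := D \<inter> L\<rparr>)"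
    using \<open>n \<ge> 1\<close> unfolding T_def nat_pow_consistent[symmetric] by blast
qed

theorem theorem4:
  fixes K (structure) and D L :: "'a set"
  assumes "field K"
    and "subdomain D K"
    and "\<forall>x \<in> carrier K. \<exists>a \<in> D. \<exists>b \<in> D. b \<noteq> \<zero> \<and> x = a \<otimes> inv b"
    and "API_domain (K\<lparr>carrier := D\<rparr>)"
    and "quasilocal (K\<lparr>carrier := D\<rparr>)"
    and "subfield L K"
  shows "API_domain (K\<lparr>carrier := D \<inter> L\<rparr>) \<and> quasilocal (K\<lparr>carrier := D \<inter> L\<rparr>)"
proof -
  interpret field K by fact
  have "subring D K"
    using subcring.axioms(1)[OF subdomain.axioms(1)[OF assms(2)]] .
  then show ?thesis
    using API_domain_subring_inter_subfield[OF _ assms(6,4,5)]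
      quasilocal_subring_inter_subfield[OF _ assms(6,5)] by blast
qed

end
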